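(* Let $n \ge 1$ and let $m$ be an even positive integer such that $\Delta_{n,m} \neq \emptyset$. Then there does not exist a finite set $\mathcal{H} = \{h_1,\dots,h_N\}$ of non-zero real forms in $n$ variables with the property that for every $p \in P_{n,m}$ there is some $h_k \in \mathcal{H}$ with $h_k p$ a sum of squares.
   Context: $H_d(\mathbb{R}^n)$ denotes the real vector space of real homogeneous forms of degree $d$ in $n$ variables $x_1,\dots,x_n$. For even $m$, $P_{n,m}$ is the set of forms $p \in H_m(\mathbb{R}^n)$ that are positive semidefinite (psd), i.e. $p(x) \ge 0$ for all $x \in \mathbb{R}^n$. A form is a sum of squares (sos) if it can be written as $\sum_k g_k^2$ with each $g_k$ a real polynomial. $\Sigma_{n,m} \subseteq P_{n,m}$ is the set of sos forms in $H_m(\mathbb{R}^n)$, and $\Delta_{n,m} = P_{n,m} \setminus \Sigma_{n,m}$. *)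

theory Defs
  imports Complex_Main
begin

text \<open>Real polynomials in the n variables x_0,...,x_{n-1}, represented by the
  polynomial functions they induce on points x :: nat => real (only the first n
  coordinates matter). Over the reals a polynomial is determined by its function,
  so this is faithful.\<close>

definition exps :: "nat \<Rightarrow> (nat \<Rightarrow> nat) set" where
  "exps n = {\<alpha>. \<forall>i\<ge>n. \<alpha> i = 0}"

definition monom :: "nat \<Rightarrow> (nat \<Rightarrow> nat) \<Rightarrow> (nat \<Rightarrow> real) \<Rightarrow> real" where
  "monom n \<alpha> x = (\<Prod>i<n. x i ^ \<alpha> i)"

definition is_poly :: "nat \<Rightarrow> ((nat \<Rightarrow> real) \<Rightarrow> real) \<Rightarrow> bool" where
  "is_poly n f \<longleftrightarrow> (\<exists>A c. finite A \<and> A \<subseteq> exps n \<and>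
      f = (\<lambda>x. \<Sum>\<alpha>\<in>A. c \<alpha> * monom n \<alpha> x))"

definition is_form :: "nat \<Rightarrow> nat \<Rightarrow> ((nat \<Rightarrow> real) \<Rightarrow> real) \<Rightarrow> bool" where
  "is_form n d f \<longleftrightarrow> (\<exists>A c. finite A \<and> A \<subseteq> {\<alpha> \<in> exps n. (\<Sum>i<n. \<alpha> i) = d} \<and>
      f = (\<lambda>x. \<Sum>\<alpha>\<in>A. c \<alpha> * monom n \<alpha> x))"

definition P_set :: "nat \<Rightarrow> nat \<Rightarrow> ((nat \<Rightarrow> real) \<Rightarrow> real) set" where
  "P_set n m = {p. is_form n m p \<and> (\<forall>x. p x \<ge> 0)}"

definition is_sos :: "nat \<Rightarrow> ((nat \<Rightarrow> real) \<Rightarrow> real) \<Rightarrow> bool" where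
  "is_sos n f \<longleftrightarrow> (\<exists>gs. (\<forall>g\<in>set gs. is_poly n g) \<and> f = (\<lambda>x. \<Sum>g\<leftarrow>gs. (g x)^2))"

definition Sigma_set :: "nat \<Rightarrow> nat \<Rightarrow> ((nat \<Rightarrow> real) \<Rightarrow> real) set" where
  "Sigma_set n m = {p. is_form n m p \<and> is_sos n p}"

definition Delta_set :: "nat \<Rightarrow> nat \<Rightarrow> ((nat \<Rightarrow> real) \<Rightarrow> real) set" where
  "Delta_set n m = P_set n m - Sigma_set n m"

end

theory Submission
  imports Defs "HOL-Computational_Algebra.Polynomial" "HOL-Library.FuncSet"
begin

text \<open>
  Suppose a finite set H of nonzero forms had the property and let p be psd but not sos.
  Choose B larger than the degree of every h in H and rescale p anisotropically,
  p_k(x) = p(x_0 / t_k^(B^0), ..., x_(n-1) / t_k^(B^(n-1))) with t_k -> 0. Every p_k is psd, so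
  by pigeonhole a single h makes h p_k sos for infinitely many k. Undoing the rescaling, the
  forms h(t^(B^0) x_0, ..., t^(B^(n-1)) x_(n-1)) p(x) are sos; divided by a suitable power of t
  they converge to c x^alpha p(x), because the monomials of h have pairwise distinct weights
  sum_j B^j alpha_j. Sums of squares of bounded degree form a closed set, so c x^alpha p is sos.
  The monomial factor is then cancelled one variable at a time: if x_i^2 q is sos then so is q,
  and if x_i K q is sos with K independent of x_i and q psd, then q vanishes wherever K does not.
  Hence p is sos, a contradiction.
\<close>

hide_const (open) Polynomial.monom

section \<open>Monomials and polynomial functions\<close>

lemma monom_scale: "monom n \<alpha> (\<lambda>i. a i * x i) = (\<Prod>i<n. a i ^ \<alpha> i) * monom n \<alpha> x"
  unfolding Defs.monom_def by (simp add: power_mult_distrib prod.distrib)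

lemma monom_add: "monom n (\<lambda>i. \<alpha> i + \<beta> i) x = monom n \<alpha> x * monom n \<beta> x"
  unfolding Defs.monom_def by (simp add: power_add prod.distrib)

lemma monom_fun_upd:
  "i < n \<Longrightarrow> monom n \<alpha> (x(i := t)) = t ^ \<alpha> i * (\<Prod>j\<in>{..<n} - {i}. x j ^ \<alpha> j)"
  unfolding Defs.monom_def by (subst prod.remove[of _ i]) (auto intro!: prod.cong)

lemma monom_fun_upd_indep: "i < n \<Longrightarrow> \<alpha> i = 0 \<Longrightarrow> monom n \<alpha> (x(i := t)) = monom n \<alpha> x"
  using monom_fun_upd[of i n \<alpha> x t] monom_fun_upd[of i n \<alpha> x "x i"] by simp

lemma monom_Suc:
  assumes "i < n" "\<alpha> i = Suc k"
  shows "monom n \<alpha> x = x i * monom n (\<alpha>(i := k)) x"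
proof -
  have "(\<Prod>j\<in>{..<n} - {i}. x j ^ (\<alpha>(i := k)) j) = (\<Prod>j\<in>{..<n} - {i}. x j ^ \<alpha> j)"
    by (intro prod.cong) auto
  then show ?thesis
    using monom_fun_upd[OF assms(1), of \<alpha> x "x i"] monom_fun_upd[OF assms(1), of "\<alpha>(i := k)" x "x i"]
    by (simp add: assms(2))
qed

lemma is_poly_monom: "is_poly n (monom n \<beta>)"
proof -
  have "monom n \<beta> = monom n (\<lambda>j. if j < n then \<beta> j else 0)"
    unfolding Defs.monom_def by (intro ext prod.cong) auto
  then show ?thesis
    unfolding is_poly_def
    by (intro exI[of _ "{\<lambda>j. if j < n then \<beta> j else 0}"] exI[of _ "\<lambda>_. 1"]) (auto simp: exps_def)
qed

lemma is_poly_const: "is_poly n (\<lambda>x. a)"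
  unfolding is_poly_def
  by (intro exI[of _ "{\<lambda>_. 0}"] exI[of _ "\<lambda>_. a"]) (auto simp: exps_def Defs.monom_def)

lemma is_poly_var:
  assumes "i < n" shows "is_poly n (\<lambda>x. x i)"
proof -
  have "monom n (\<lambda>j. if j = i then 1 else 0) x = x i * monom n (\<lambda>_. 0) x" for x
  proof -
    have "(\<lambda>j. if j = i then 1 else 0)(i := 0) = (\<lambda>_. 0::nat)" by auto
    then show ?thesis using monom_Suc[OF assms, of "\<lambda>j. if j = i then 1 else 0" 0 x] by simp
  qed
  moreover have "monom n (\<lambda>_. 0) x = 1" for x
    unfolding Defs.monom_def by simp
  ultimately have "monom n (\<lambda>j. if j = i then 1 else 0) = (\<lambda>x. x i)" by auto
  then show ?thesis using is_poly_monom by metis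
qed

lemma is_poly_scale:
  assumes "is_poly n f" shows "is_poly n (\<lambda>x. a * f x)"
proof -
  obtain A c where "finite A" "A \<subseteq> exps n" "f = (\<lambda>x. \<Sum>\<alpha>\<in>A. c \<alpha> * monom n \<alpha> x)"
    using assms unfolding is_poly_def by blast
  then show ?thesis
    unfolding is_poly_def
    by (intro exI[of _ A] exI[of _ "\<lambda>\<alpha>. a * c \<alpha>"]) (simp add: sum_distrib_left mult.assoc)
qed

lemma is_poly_comp_scale:
  assumes "is_poly n f" shows "is_poly n (\<lambda>x. f (\<lambda>i. a i * x i))"
proof -
  obtain A c where "finite A" "A \<subseteq> exps n" "f = (\<lambda>x. \<Sum>\<alpha>\<in>A. c \<alpha> * monom n \<alpha> x)"
    using assms unfolding is_poly_def by blast
  then show ?thesis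
    unfolding is_poly_def
    by (intro exI[of _ A] exI[of _ "\<lambda>\<alpha>. c \<alpha> * (\<Prod>i<n. a i ^ \<alpha> i)"]) (simp add: monom_scale mult.assoc)
qed

lemma is_poly_add:
  assumes "is_poly n f" "is_poly n g" shows "is_poly n (\<lambda>x. f x + g x)"
proof -
  obtain A c where A: "finite A" "A \<subseteq> exps n" "f = (\<lambda>x. \<Sum>\<alpha>\<in>A. c \<alpha> * monom n \<alpha> x)"
    using assms(1) unfolding is_poly_def by blast
  obtain B d where B: "finite B" "B \<subseteq> exps n" "g = (\<lambda>x. \<Sum>\<alpha>\<in>B. d \<alpha> * monom n \<alpha> x)"
    using assms(2) unfolding is_poly_def by blast
  define e where "e \<alpha> = (if \<alpha> \<in> A then c \<alpha> else 0) + (if \<alpha> \<in> B then d \<alpha> else 0)" for \<alpha>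
  have "f x + g x = (\<Sum>\<alpha>\<in>A \<union> B. e \<alpha> * monom n \<alpha> x)" for x
  proof -
    have "(\<Sum>\<alpha>\<in>A \<union> B. e \<alpha> * monom n \<alpha> x) =
        (\<Sum>\<alpha>\<in>A \<union> B. if \<alpha> \<in> A then c \<alpha> * monom n \<alpha> x else 0) +
        (\<Sum>\<alpha>\<in>A \<union> B. if \<alpha> \<in> B then d \<alpha> * monom n \<alpha> x else 0)"
      unfolding sum.distrib[symmetric] by (intro sum.cong refl) (simp add: e_def distrib_right)
    also have "\<dots> = f x + g x"
      using A B by (simp add: sum.If_cases Int_absorb1 Int_absorb2)
    finally show ?thesis by simp
  qed
  then show ?thesis unfolding is_poly_def using A B by (intro exI[of _ "A \<union> B"] exI[of _ e]) auto
qed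

lemma is_poly_diff: "is_poly n f \<Longrightarrow> is_poly n g \<Longrightarrow> is_poly n (\<lambda>x. f x - g x)"
  using is_poly_add[of n f "\<lambda>x. (-1) * g x"] is_poly_scale[of n g "-1"] by simp

lemma is_poly_mult:
  assumes "is_poly n f" "is_poly n g" shows "is_poly n (\<lambda>x. f x * g x)"
proof -
  obtain A c where A: "finite A" "A \<subseteq> exps n" "f = (\<lambda>x. \<Sum>\<alpha>\<in>A. c \<alpha> * monom n \<alpha> x)"
    using assms(1) unfolding is_poly_def by blast
  obtain B d where B: "finite B" "B \<subseteq> exps n" "g = (\<lambda>x. \<Sum>\<alpha>\<in>B. d \<alpha> * monom n \<alpha> x)"
    using assms(2) unfolding is_poly_def by blast
  define plus where "plus = (\<lambda>(\<alpha>::nat \<Rightarrow> nat, \<beta>). \<lambda>i. \<alpha> i + \<beta> i)"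
  define e where "e \<gamma> = (\<Sum>p\<in>{p \<in> A \<times> B. plus p = \<gamma>}. c (fst p) * d (snd p))" for \<gamma>
  have fin: "finite (A \<times> B)" using A B by auto
  have "f x * g x = (\<Sum>\<gamma>\<in>plus ` (A \<times> B). e \<gamma> * monom n \<gamma> x)" for x
  proof -
    have "f x * g x = (\<Sum>p\<in>A \<times> B. c (fst p) * d (snd p) * monom n (plus p) x)"
      unfolding A(3) B(3) sum_product sum.cartesian_product
      by (intro sum.cong) (auto simp: plus_def monom_add)
    also have "\<dots> = (\<Sum>\<gamma>\<in>plus ` (A \<times> B). \<Sum>p\<in>{p \<in> A \<times> B. plus p = \<gamma>}. c (fst p) * d (snd p) * monom n (plus p) x)"
      by (rule sum.image_gen[OF fin])
    also have "\<dots> = (\<Sum>\<gamma>\<in>plus ` (A \<times> B). e \<gamma> * monom n \<gamma> x)"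
      unfolding e_def sum_distrib_right by (intro sum.cong refl) auto
    finally show ?thesis .
  qed
  moreover have "plus ` (A \<times> B) \<subseteq> exps n"
    using A(2) B(2) unfolding plus_def exps_def by auto
  ultimately show ?thesis unfolding is_poly_def using fin by blast
qed

lemma is_poly_sum:
  "finite S \<Longrightarrow> (\<And>s. s \<in> S \<Longrightarrow> is_poly n (f s)) \<Longrightarrow> is_poly n (\<lambda>x. \<Sum>s\<in>S. f s x)"
  by (induction S rule: finite_induct) (auto intro: is_poly_const is_poly_add)

lemma is_poly_prod:
  "finite S \<Longrightarrow> (\<And>s. s \<in> S \<Longrightarrow> is_poly n (f s)) \<Longrightarrow> is_poly n (\<lambda>x. \<Prod>s\<in>S. f s x)"
  by (induction S rule: finite_induct) (auto intro: is_poly_const is_poly_mult)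

lemma is_poly_poly_var: "i < n \<Longrightarrow> is_poly n (\<lambda>x. poly q (x i))"
proof (induction q)
  case (pCons a q)
  then have "is_poly n (\<lambda>x. a + x i * poly q (x i))"
    by (intro is_poly_add is_poly_mult is_poly_const is_poly_var)
  then show ?case by simp
qed (simp add: is_poly_const)

lemma is_form_imp_is_poly: "is_form n d f \<Longrightarrow> is_poly n f"
  unfolding is_form_def is_poly_def by blast

lemma is_form_comp_scale:
  assumes "is_form n d f" shows "is_form n d (\<lambda>x. f (\<lambda>i. a i * x i))"
proof -
  obtain A c where "finite A" "A \<subseteq> {\<alpha> \<in> exps n. (\<Sum>i<n. \<alpha> i) = d}"
      "f = (\<lambda>x. \<Sum>\<alpha>\<in>A. c \<alpha> * monom n \<alpha> x)"
    using assms unfolding is_form_def by blast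
  then show ?thesis
    unfolding is_form_def
    by (intro exI[of _ A] exI[of _ "\<lambda>\<alpha>. c \<alpha> * (\<Prod>i<n. a i ^ \<alpha> i)"]) (simp add: monom_scale mult.assoc)
qed

lemma is_poly_cong:
  assumes "is_poly n f" "\<And>i. i < n \<Longrightarrow> x i = y i" shows "f x = f y"
proof -
  obtain A c where "f = (\<lambda>x. \<Sum>\<alpha>\<in>A. c \<alpha> * monom n \<alpha> x)"
    using assms(1) unfolding is_poly_def by blast
  moreover have "monom n \<alpha> x = monom n \<alpha> y" for \<alpha>
    unfolding Defs.monom_def using assms(2) by (intro prod.cong) auto
  ultimately show ?thesis by simp
qed

section \<open>Restrictions to coordinate lines\<close>

lemma poly_eq_0_if_infinite_zeros:
  fixes q :: "real poly"
  assumes "infinite A" "\<And>t. t \<in> A \<Longrightarrow> poly q t = 0"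
  shows "q = 0"
  using poly_roots_finite[of q] assms finite_subset[of A "{t. poly q t = 0}"] by blast

text \<open>The leading coefficients of the squares of maximal degree are positive and cannot cancel.\<close>

lemma degree_le_sum_list_squares:
  fixes qs :: "real poly list"
  assumes "q \<in> set qs"
  shows "2 * degree q \<le> degree (\<Sum>q\<leftarrow>qs. q * q)"
proof -
  define M where "M = Max (degree ` set qs)"
  have "degree q \<le> M" unfolding M_def using assms by auto
  have "M \<in> degree ` set qs" unfolding M_def using assms by (intro Max_in) auto
  then obtain q0 where q0: "q0 \<in> set qs" "degree q0 = M" by blast
  have top_coeff: "coeff (q' * q') (2 * M) = (if degree q' = M then (lead_coeff q')\<^sup>2 else 0)"
    if "q' \<in> set qs" for q'
  proof (cases "degree q' = M")
    case True then show ?thesis using coeff_mult_degree_sum[of q' q'] by (simp add: power2_eq_square mult_2)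
  next
    case False
    moreover have "degree q' \<le> M" unfolding M_def using that by auto
    ultimately have "degree (q' * q') < 2 * M" using degree_mult_le[of q' q'] by linarith
    then show ?thesis using False by (simp add: coeff_eq_0)
  qed
  show ?thesis
  proof (cases "M = 0")
    case False
    then have "(lead_coeff q0)\<^sup>2 > 0" using q0(2) by auto
    also have "(lead_coeff q0)\<^sup>2 \<le> (\<Sum>q'\<leftarrow>qs. if degree q' = M then (lead_coeff q')\<^sup>2 else 0)"
      using q0 by (intro member_le_sum_list) auto
    also have "\<dots> = (\<Sum>q'\<leftarrow>qs. coeff (q' * q') (2 * M))"
      using top_coeff by (intro arg_cong[where f = sum_list] map_cong) auto
    also have "\<dots> = coeff (\<Sum>q\<leftarrow>qs. q * q) (2 * M)"
      by (induction qs) auto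
    finally have "2 * M \<le> degree (\<Sum>q\<leftarrow>qs. q * q)" by (intro le_degree) simp
    with \<open>degree q \<le> M\<close> show ?thesis by linarith
  qed (use \<open>degree q \<le> M\<close> in simp)
qed

definition line_deg_le :: "nat \<Rightarrow> nat \<Rightarrow> ((nat \<Rightarrow> real) \<Rightarrow> real) \<Rightarrow> bool" where
  "line_deg_le n D f \<longleftrightarrow> (\<forall>x i. i < n \<longrightarrow> (\<exists>q. degree q \<le> D \<and> (\<forall>t. f (x(i := t)) = poly q t)))"

lemma sum_monoms_line_deg_le:
  assumes "finite A" "\<And>\<alpha> i. \<alpha> \<in> A \<Longrightarrow> i < n \<Longrightarrow> \<alpha> i \<le> D"
  shows "line_deg_le n D (\<lambda>x. \<Sum>\<alpha>\<in>A. c \<alpha> * monom n \<alpha> x)"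
  unfolding line_deg_le_def
proof (intro allI impI)
  fix x i assume i: "i < n"
  define q where "q = (\<Sum>\<alpha>\<in>A. Polynomial.monom (c \<alpha> * (\<Prod>j\<in>{..<n} - {i}. x j ^ \<alpha> j)) (\<alpha> i))"
  have "degree q \<le> D"
    unfolding q_def using assms i by (intro degree_sum_le) (auto intro: order_trans[OF degree_monom_le])
  moreover have "\<forall>t. (\<Sum>\<alpha>\<in>A. c \<alpha> * monom n \<alpha> (x(i := t))) = poly q t"
    unfolding q_def using i by (auto simp: poly_sum poly_monom monom_fun_upd intro!: sum.cong)
  ultimately show "\<exists>q. degree q \<le> D \<and> (\<forall>t. (\<Sum>\<alpha>\<in>A. c \<alpha> * monom n \<alpha> (x(i := t))) = poly q t)"
    by blast
qed

lemma is_form_line_deg_le: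
  assumes "is_form n d f" shows "line_deg_le n d f"
proof -
  obtain A c where A: "finite A" "A \<subseteq> {\<alpha> \<in> exps n. (\<Sum>i<n. \<alpha> i) = d}"
      "f = (\<lambda>x. \<Sum>\<alpha>\<in>A. c \<alpha> * monom n \<alpha> x)"
    using assms unfolding is_form_def by blast
  have "\<alpha> i \<le> d" if "\<alpha> \<in> A" "i < n" for \<alpha> i
    using member_le_sum[of i "{..<n}" \<alpha>] that A(2) by auto
  then show ?thesis unfolding A(3) by (intro sum_monoms_line_deg_le A(1))
qed

lemma is_poly_line_deg_le:
  assumes "is_poly n f" shows "\<exists>D. line_deg_le n D f"
proof -
  obtain A c where A: "finite A" "f = (\<lambda>x. \<Sum>\<alpha>\<in>A. c \<alpha> * monom n \<alpha> x)"
    using assms unfolding is_poly_def by blast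
  have "\<alpha> i \<le> (\<Sum>\<beta>\<in>A. \<Sum>j<n. \<beta> j)" if "\<alpha> \<in> A" "i < n" for \<alpha> i
    using member_le_sum[of i "{..<n}" \<alpha>] member_le_sum[of \<alpha> A "\<lambda>\<beta>. \<Sum>j<n. \<beta> j"] that A(1)
    by auto
  then show ?thesis unfolding A(2) using A(1) by (blast intro: sum_monoms_line_deg_le)
qed

lemma is_poly_restrict_line: "is_poly n f \<Longrightarrow> i < n \<Longrightarrow> \<exists>q. \<forall>t. f (x(i := t)) = poly q t"
  using is_poly_line_deg_le unfolding line_deg_le_def by blast

lemma line_deg_le_scale: "line_deg_le n D f \<Longrightarrow> line_deg_le n D (\<lambda>x. a * f x)"
  unfolding line_deg_le_def by (metis degree_smult_le order_trans poly_smult)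

lemma line_deg_le_mult:
  assumes "line_deg_le n D f" "line_deg_le n E g" shows "line_deg_le n (D + E) (\<lambda>x. f x * g x)"
  unfolding line_deg_le_def
proof (intro allI impI)
  fix x i assume "i < n"
  then obtain p q where "degree p \<le> D" "\<forall>t. f (x(i := t)) = poly p t"
      "degree q \<le> E" "\<forall>t. g (x(i := t)) = poly q t"
    using assms unfolding line_deg_le_def by meson
  then show "\<exists>r. degree r \<le> D + E \<and> (\<forall>t. f (x(i := t)) * g (x(i := t)) = poly r t)"
    by (intro exI[of _ "p * q"]) (auto intro: order_trans[OF degree_mult_le])
qed

lemma is_poly_vanishes_off_hyperplanes:
  assumes "is_poly n f" "J \<subseteq> {..<n}" "\<And>x. (\<forall>j\<in>J. x j \<noteq> 0) \<Longrightarrow> f x = 0"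
  shows "f x = 0"
proof -
  have "finite J" using assms(2) finite_subset by blast
  then show ?thesis using assms(2,3)
  proof (induction J arbitrary: x rule: finite_induct)
    case (insert a J)
    have "f y = 0" if "\<forall>j\<in>J. y j \<noteq> 0" for y
    proof -
      obtain q where q: "\<And>t. f (y(a := t)) = poly q t"
        using is_poly_restrict_line[OF assms(1)] insert.prems(1) by blast
      have "poly q t = 0" if "t \<in> {0<..}" for t
      proof -
        have "\<forall>j\<in>insert a J. (y(a := t)) j \<noteq> 0" using \<open>\<forall>j\<in>J. y j \<noteq> 0\<close> that by auto
        then show ?thesis using insert.prems(2) q[of t] by simp
      qed
      then have "q = 0" by (intro poly_eq_0_if_infinite_zeros[OF infinite_Ioi])
      then show "f y = 0" using q[of "y a"] by simp
    qed
    then show ?case using insert.IH insert.prems(1) by blast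
  qed simp
qed

lemma is_sos_nonneg: "is_sos n f \<Longrightarrow> f x \<ge> 0"
  unfolding is_sos_def by (auto intro!: sum_list_nonneg)

lemma is_sos_zero: "is_sos n (\<lambda>x. 0)"
  unfolding is_sos_def by (intro exI[of _ "[]"]) simp

lemma is_sos_imp_is_poly: "is_sos n f \<Longrightarrow> is_poly n f"
proof -
  have "(\<And>g. g \<in> set gs \<Longrightarrow> is_poly n g) \<Longrightarrow> is_poly n (\<lambda>x. \<Sum>g\<leftarrow>gs. (g x)\<^sup>2)" for gs
    by (induction gs) (simp_all add: power2_eq_square is_poly_const is_poly_add is_poly_mult)
  then show "is_sos n f \<Longrightarrow> is_poly n f" unfolding is_sos_def by blast
qed

lemma sum_list_power2_mult: "(\<Sum>g\<leftarrow>gs. (a * f g)\<^sup>2) = (a::real)\<^sup>2 * (\<Sum>g\<leftarrow>gs. (f g)\<^sup>2)"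
  by (induction gs) (simp_all add: power_mult_distrib distrib_left)

lemma is_sos_scale:
  assumes "is_sos n f" "a \<ge> 0" shows "is_sos n (\<lambda>x. a * f x)"
proof -
  obtain gs where gs: "\<forall>g\<in>set gs. is_poly n g" "f = (\<lambda>x. \<Sum>g\<leftarrow>gs. (g x)\<^sup>2)"
    using assms(1) unfolding is_sos_def by blast
  have "a * f x = (\<Sum>g\<leftarrow>map (\<lambda>g x. sqrt a * g x) gs. (g x)\<^sup>2)" for x
    using assms(2) by (simp add: gs(2) o_def sum_list_power2_mult)
  moreover have "\<forall>g\<in>set (map (\<lambda>g x. sqrt a * g x) gs). is_poly n g"
    using gs(1) by (auto intro: is_poly_scale)
  ultimately show ?thesis unfolding is_sos_def by blast
qed

lemma is_sos_comp_scale: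
  assumes "is_sos n f" shows "is_sos n (\<lambda>x. f (\<lambda>i. a i * x i))"
proof -
  obtain gs where gs: "\<forall>g\<in>set gs. is_poly n g" "f = (\<lambda>x. \<Sum>g\<leftarrow>gs. (g x)\<^sup>2)"
    using assms unfolding is_sos_def by blast
  have "\<forall>g\<in>set (map (\<lambda>g x. g (\<lambda>i. a i * x i)) gs). is_poly n g"
    using gs(1) by (auto intro: is_poly_comp_scale)
  then show ?thesis
    unfolding is_sos_def gs(2) by (intro exI[of _ "map (\<lambda>g x. g (\<lambda>i. a i * x i)) gs"]) (simp add: o_def)
qed

lemma is_sos_summand_line_deg_le:
  assumes "line_deg_le n D (\<lambda>x. \<Sum>g\<leftarrow>gs. (g x)\<^sup>2)" "\<forall>g\<in>set gs. is_poly n g" "g \<in> set gs"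
  shows "line_deg_le n D g"
  unfolding line_deg_le_def
proof (intro allI impI)
  fix x i assume i: "i < n"
  obtain P where P: "degree P \<le> D" "\<And>t. (\<Sum>g\<leftarrow>gs. (g (x(i := t)))\<^sup>2) = poly P t"
    using assms(1) i unfolding line_deg_le_def by blast
  have "\<forall>g'\<in>set gs. \<exists>q. \<forall>t. g' (x(i := t)) = poly q t"
    using is_poly_restrict_line[OF _ i] assms(2) by blast
  then obtain Q where Q: "\<And>g' t. g' \<in> set gs \<Longrightarrow> g' (x(i := t)) = poly (Q g') t"
    by metis
  have "poly P t = poly (\<Sum>g\<leftarrow>gs. Q g * Q g) t" for t
    unfolding P(2)[symmetric] using Q
    by (induction gs) (auto simp: power2_eq_square)
  then have "P = (\<Sum>g\<leftarrow>gs. Q g * Q g)" using poly_eq_poly_eq_iff by blast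
  then have "2 * degree (Q g) \<le> degree P"
    using degree_le_sum_list_squares[of "Q g" "map Q gs"] assms(3) by (simp add: o_def)
  then show "\<exists>q. degree q \<le> D \<and> (\<forall>t. g (x(i := t)) = poly q t)"
    using P(1) Q[OF assms(3)] by (intro exI[of _ "Q g"]) auto
qed

section \<open>Lagrange interpolation on a grid\<close>

definition lagrange_basis :: "nat \<Rightarrow> nat \<Rightarrow> real poly" where
  "lagrange_basis e j = (\<Prod>i\<in>{..e} - {j}. smult (1 / (real j - real i)) [:- real i, 1:])"

lemma poly_lagrange_basis_node:
  assumes "k \<le> e" shows "poly (lagrange_basis e j) (real k) = (if k = j then 1 else 0)"
proof -
  have "poly (lagrange_basis e j) (real k) = (\<Prod>i\<in>{..e} - {j}. (real k - real i) / (real j - real i))"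
    unfolding lagrange_basis_def poly_prod by (intro prod.cong) (auto simp: diff_divide_distrib)
  also have "\<dots> = (if k = j then 1 else 0)"
    using assms by (auto intro: prod_zero)
  finally show ?thesis .
qed

lemma degree_lagrange_basis:
  assumes "j \<le> e" shows "degree (lagrange_basis e j) \<le> e"
proof -
  have "degree (lagrange_basis e j) \<le> (\<Sum>i\<in>{..e} - {j}. 1)"
    unfolding lagrange_basis_def
    by (rule order_trans[OF degree_prod_sum_le]) (auto intro!: sum_mono order_trans[OF degree_smult_le])
  also have "\<dots> = e" using assms by simp
  finally show ?thesis .
qed

lemma lagrange_interpolation:
  fixes q :: "real poly"
  assumes "degree q \<le> e"
  shows "poly q t = (\<Sum>j\<le>e. poly q (real j) * poly (lagrange_basis e j) t)"
proof -
  define L where "L = (\<Sum>j\<le>e. smult (poly q (real j)) (lagrange_basis e j))"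
  have "degree L \<le> e"
    unfolding L_def by (intro degree_sum_le) (auto intro: order_trans[OF degree_smult_le] degree_lagrange_basis)
  moreover have "poly q x = poly L x" if "x \<in> real ` {..e}" for x
    using that unfolding L_def poly_sum by (auto simp: poly_lagrange_basis_node if_distrib cong: if_cong)
  moreover have "card (real ` {..e}) = e + 1" by (subst card_image) (auto simp: inj_on_def)
  ultimately have "q = L" using assms by (intro poly_eqI_degree[of "real ` {..e}"]) auto
  then have "poly q t = poly L t" by simp
  then show ?thesis unfolding L_def poly_sum by simp
qed

definition grid_basis :: "nat \<Rightarrow> nat set \<Rightarrow> (nat \<Rightarrow> nat) \<Rightarrow> (nat \<Rightarrow> real) \<Rightarrow> real" where
  "grid_basis e I s x = (\<Prod>i\<in>I. poly (lagrange_basis e (s i)) (x i))"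

abbreviation grid :: "nat \<Rightarrow> nat \<Rightarrow> (nat \<Rightarrow> nat) set" where
  "grid n e \<equiv> Pi\<^sub>E {..<n} (\<lambda>_. {..e})"

lemma finite_grid: "finite (grid n e)"
  by (intro finite_PiE) auto

definition grid_point :: "nat \<Rightarrow> (nat \<Rightarrow> nat) \<Rightarrow> nat \<Rightarrow> real" where
  "grid_point n s = override_on (\<lambda>_. 0) (\<lambda>i. real (s i)) {..<n}"

lemma is_poly_grid_basis: "is_poly n (grid_basis e {..<n} s)"
  unfolding grid_basis_def by (rule is_poly_prod) (auto intro: is_poly_poly_var)

lemma lagrange_interpolation_partial_grid:
  assumes "line_deg_le n e g" "finite I" "I \<subseteq> {..<n}"
  shows "g x = (\<Sum>s\<in>Pi\<^sub>E I (\<lambda>_. {..e}). grid_basis e I s x * g (override_on x (\<lambda>i. real (s i)) I))"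
  using assms(2,3)
proof (induction I rule: finite_induct)
  case (insert a I)
  define over where "over I s = override_on x (\<lambda>i. real (s i)) I" for I s
  have along_a: "g (over I s) = (\<Sum>j\<le>e. poly (lagrange_basis e j) (x a) * g (over (insert a I) (s(a := j))))"
    for s
  proof -
    obtain q where q: "degree q \<le> e" "\<And>t. g ((over I s)(a := t)) = poly q t"
      using assms(1) insert.prems unfolding line_deg_le_def by blast
    have "(over I s)(a := x a) = over I s" "\<And>j. (over I s)(a := real j) = over (insert a I) (s(a := j))"
      unfolding over_def override_on_def using insert.hyps(2) by auto
    then show ?thesis
      using lagrange_interpolation[OF q(1), of "x a"] q(2)[of "x a"] q(2)[of "real _"]
      by (simp add: mult.commute)
  qed
  have basis_insert: "grid_basis e (insert a I) (s(a := j)) x = poly (lagrange_basis e j) (x a) * grid_basis e I s x"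
    for s j
    unfolding grid_basis_def using insert.hyps by (auto intro!: prod.cong)
  have inj: "inj_on (\<lambda>(j, s). s(a := j)) ({..e} \<times> Pi\<^sub>E I (\<lambda>_. {..e}))"
    using inj_combinator[OF insert.hyps(2), of "\<lambda>_. {..e}"] by simp
  have "g x = (\<Sum>s\<in>Pi\<^sub>E I (\<lambda>_. {..e}). grid_basis e I s x * g (over I s))"
    using insert unfolding over_def by auto
  also have "\<dots> = (\<Sum>s\<in>Pi\<^sub>E I (\<lambda>_. {..e}). \<Sum>j\<le>e.
      grid_basis e (insert a I) (s(a := j)) x * g (over (insert a I) (s(a := j))))"
    by (simp add: along_a basis_insert sum_distrib_left ac_simps)
  also have "\<dots> = (\<Sum>(j, s)\<in>{..e} \<times> Pi\<^sub>E I (\<lambda>_. {..e}).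
      grid_basis e (insert a I) (s(a := j)) x * g (over (insert a I) (s(a := j))))"
    by (subst sum.swap) (simp add: sum.cartesian_product)
  also have "\<dots> = (\<Sum>s\<in>Pi\<^sub>E (insert a I) (\<lambda>_. {..e}). grid_basis e (insert a I) s x * g (over (insert a I) s))"
    unfolding PiE_insert_eq by (subst sum.reindex[OF inj]) (simp add: case_prod_beta)
  finally show ?case unfolding over_def .
qed (simp add: grid_basis_def)

lemma lagrange_interpolation_grid:
  assumes "line_deg_le n e g" "is_poly n g"
  shows "g x = (\<Sum>s\<in>grid n e. grid_basis e {..<n} s x * g (grid_point n s))"
proof -
  have "g (override_on x (\<lambda>i. real (s i)) {..<n}) = g (grid_point n s)" for s
    unfolding grid_point_def by (rule is_poly_cong[OF assms(2)]) simp
  then show ?thesis using lagrange_interpolation_partial_grid[OF assms(1), of "{..<n}" x] by simp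
qed

section \<open>Positive semidefinite quadratic forms\<close>

definition quad_form :: "'a set \<Rightarrow> ('a \<Rightarrow> 'a \<Rightarrow> real) \<Rightarrow> ('a \<Rightarrow> real) \<Rightarrow> real" where
  "quad_form S G y = (\<Sum>s\<in>S. \<Sum>s'\<in>S. y s * y s' * G s s')"

lemma quad_form_cong: "(\<And>s. s \<in> S \<Longrightarrow> y s = z s) \<Longrightarrow> quad_form S G y = quad_form S G z"
  unfolding quad_form_def by (intro sum.cong refl) auto

lemma quad_form_insert:
  assumes "finite S" "a \<notin> S" "\<And>s s'. G s s' = G s' s"
  shows "quad_form (insert a S) G y = (y a)\<^sup>2 * G a a + 2 * y a * (\<Sum>s\<in>S. G a s * y s) + quad_form S G y"
proof -
  have "(\<Sum>s\<in>S. y s * y a * G s a) = y a * (\<Sum>s\<in>S. G a s * y s)"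
    "(\<Sum>s\<in>S. y a * y s * G a s) = y a * (\<Sum>s\<in>S. G a s * y s)"
    unfolding sum_distrib_left using assms(3) by (auto intro: sum.cong simp: ac_simps)
  then show ?thesis
    unfolding quad_form_def using assms(1,2) by (simp add: sum.distrib power2_eq_square)
qed

lemma psd_zero_diagonal_imp_zero_row:
  assumes "finite S" "a \<notin> S" "\<And>s s'. G s s' = G s' s" "\<And>y. quad_form (insert a S) G y \<ge> 0"
    and "G a a = 0" "s \<in> S"
  shows "G a s = 0"
proof (rule ccontr)
  assume "G a s \<noteq> 0"
  define y where "y = (\<lambda>t. if t = s then 1 else 0)(a := - (G s s + 1) / (2 * G a s))"
  have y: "y t = (if t = s then 1 else 0)" if "t \<in> S" for t
    using that assms(2) unfolding y_def by auto
  have "(\<Sum>t\<in>S. G a t * y t) = (\<Sum>t\<in>S. if t = s then G a s else 0)"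
    using y by (intro sum.cong) auto
  moreover have "quad_form S G y = (\<Sum>t\<in>S. if t = s then (\<Sum>t'\<in>S. if t' = s then G s s else 0) else 0)"
    unfolding quad_form_def using y by (auto intro!: sum.cong)
  ultimately have "(\<Sum>t\<in>S. G a t * y t) = G a s" "quad_form S G y = G s s"
    using assms(1,6) by simp_all
  then have "quad_form (insert a S) G y = -1"
    using \<open>G a s \<noteq> 0\<close> by (simp add: quad_form_insert[of S a G, OF assms(1-3)] assms(5) y_def field_simps)
  then show False using assms(4)[of y] by simp
qed

lemma quad_form_complete_square:
  assumes "finite S" "a \<notin> S" "\<And>s s'. G s s' = G s' s" "G a a > 0"
  shows "quad_form (insert a S) G y =
    G a a * (y a + (\<Sum>s\<in>S. G a s * y s) / G a a)\<^sup>2 +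
    quad_form S (\<lambda>s s'. G s s' - G a s * G a s' / G a a) y"
proof -
  define L where "L = (\<Sum>s\<in>S. G a s * y s)"
  have "L\<^sup>2 / G a a = (\<Sum>s\<in>S. \<Sum>s'\<in>S. y s * y s' * (G a s * G a s' / G a a))"
    unfolding L_def power2_eq_square sum_product sum_divide_distrib
    by (intro sum.cong refl) (simp add: ac_simps)
  then have Schur: "quad_form S (\<lambda>s s'. G s s' - G a s * G a s' / G a a) y = quad_form S G y - L\<^sup>2 / G a a"
    unfolding quad_form_def by (simp add: right_diff_distrib sum_subtractf)
  show ?thesis
    unfolding quad_form_insert[of S a G, OF assms(1-3)] L_def[symmetric] Schur using assms(4)
    by (simp add: power2_eq_square field_simps)
qed

lemma psd_nonpositive_pivot:
  assumes "finite S" "a \<notin> S" "\<And>s s'. G s s' = G s' s" "\<And>y. quad_form (insert a S) G y \<ge> 0"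
    and "\<not> G a a > 0"
  shows "quad_form (insert a S) G y = quad_form S G y"
proof -
  note expand = quad_form_insert[of S a G, OF assms(1-3)]
  define e where "e = (\<lambda>_. 0)(a := 1 :: real)"
  have "quad_form S G e = quad_form S G (\<lambda>_. 0)" "(\<Sum>s\<in>S. G a s * e s) = 0"
    unfolding e_def using assms(2) by (auto intro!: quad_form_cong sum.neutral)
  moreover have "quad_form S G (\<lambda>_. 0) = 0" "e a = 1" by (simp_all add: quad_form_def e_def)
  ultimately have "G a a = 0"
    using assms(4)[of e] assms(5) by (simp add: expand)
  have "G a s = 0" if "s \<in> S" for s
    by (rule psd_zero_diagonal_imp_zero_row[of S a G, OF assms(1-4) \<open>G a a = 0\<close> that])
  then have "(\<Sum>s\<in>S. G a s * y s) = 0"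
    by (intro sum.neutral) simp
  then show ?thesis unfolding expand \<open>G a a = 0\<close> by simp
qed

lemma psd_schur_complement:
  assumes "finite S" "a \<notin> S" "\<And>s s'. G s s' = G s' s" "\<And>y. quad_form (insert a S) G y \<ge> 0"
    and "G a a > 0"
  shows "quad_form S (\<lambda>s s'. G s s' - G a s * G a s' / G a a) y \<ge> 0"
proof -
  define v where "v = y(a := - (\<Sum>s\<in>S. G a s * y s) / G a a)"
  have "(\<Sum>s\<in>S. G a s * v s) = (\<Sum>s\<in>S. G a s * y s)"
    "quad_form S (\<lambda>s s'. G s s' - G a s * G a s' / G a a) v = quad_form S (\<lambda>s s'. G s s' - G a s * G a s' / G a a) y"
    unfolding v_def using assms(2) by (auto intro!: sum.cong quad_form_cong)
  then have "quad_form (insert a S) G v = quad_form S (\<lambda>s s'. G s s' - G a s * G a s' / G a a) y"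
    unfolding quad_form_complete_square[of S a G, OF assms(1-3,5)] by (simp add: v_def)
  then show ?thesis using assms(4)[of v] by simp
qed

lemma square_pivot_row:
  assumes "finite S" "a \<notin> S" "g > 0"
  shows "(\<Sum>s\<in>insert a S. ((\<lambda>s. v s / sqrt g)(a := sqrt g)) s * y s)\<^sup>2 =
    g * (y a + (\<Sum>s\<in>S. v s * y s) / g)\<^sup>2"
proof -
  have "sqrt g * sqrt g = g" using assms(3) by simp
  then have "(\<Sum>s\<in>S. v s * y s) / sqrt g = sqrt g * ((\<Sum>s\<in>S. v s * y s) / g)"
    using assms(3) by (simp add: field_simps)
  moreover have "(\<Sum>s\<in>S. ((\<lambda>s. v s / sqrt g)(a := sqrt g)) s * y s) = (\<Sum>s\<in>S. v s * y s) / sqrt g"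
    unfolding sum_divide_distrib using assms(2) by (intro sum.cong) auto
  ultimately have "(\<Sum>s\<in>insert a S. ((\<lambda>s. v s / sqrt g)(a := sqrt g)) s * y s) =
      sqrt g * (y a + (\<Sum>s\<in>S. v s * y s) / g)"
    using assms(1,2) by (simp add: distrib_left)
  then show ?thesis using assms(3) by (simp add: power_mult_distrib)
qed

lemma sum_insert_fun_upd_zero:
  "finite S \<Longrightarrow> a \<notin> S \<Longrightarrow> (\<Sum>s\<in>insert a S. (w(a := 0)) s * y s) = (\<Sum>s\<in>S. w s * (y s :: real))"
  by (auto intro: sum.cong)

text \<open>Cholesky decomposition, by induction on the index set: a positive pivot is split off
  as one square and the Schur complement remains positive semidefinite.\<close>

lemma psd_quad_form_eq_sum_squares:
  assumes "finite S" "\<And>s s'. G s s' = G s' s" "\<And>y. quad_form S G y \<ge> 0"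
  shows "\<exists>ws. \<forall>y. quad_form S G y = (\<Sum>w\<leftarrow>ws. (\<Sum>s\<in>S. w s * y s)\<^sup>2)"
  using assms
proof (induction S arbitrary: G rule: finite_induct)
  case empty then show ?case by (intro exI[of _ "[]"]) (simp add: quad_form_def)
next
  case (insert a S)
  define extend where "extend ws = map (\<lambda>w. w(a := 0)) ws" for ws :: "('a \<Rightarrow> real) list"
  have extend: "(\<Sum>w\<leftarrow>extend ws. (\<Sum>s\<in>insert a S. w s * y s)\<^sup>2) = (\<Sum>w\<leftarrow>ws. (\<Sum>s\<in>S. w s * y s)\<^sup>2)"
    for ws y
    unfolding extend_def using sum_insert_fun_upd_zero[OF insert.hyps] by (simp add: o_def)
  show ?case
  proof (cases "G a a > 0")
    case True
    define G' where "G' = (\<lambda>s s'. G s s' - G a s * G a s' / G a a)"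
    define w0 where "w0 = (\<lambda>s. G a s / sqrt (G a a))(a := sqrt (G a a))"
    have "G' s s' = G' s' s" for s s'
      unfolding G'_def using insert.prems(1)[of s s'] by (simp add: mult.commute)
    then obtain ws where ws: "\<forall>y. quad_form S G' y = (\<Sum>w\<leftarrow>ws. (\<Sum>s\<in>S. w s * y s)\<^sup>2)"
      using insert.IH[of G'] psd_schur_complement[of S a G, OF insert.hyps insert.prems True] unfolding G'_def
      by blast
    show ?thesis
      using quad_form_complete_square[of S a G, OF insert.hyps insert.prems(1) True, folded G'_def] ws extend
        square_pivot_row[OF insert.hyps True, of "G a"] unfolding w0_def[symmetric]
      by (intro exI[of _ "w0 # extend ws"]) simp
  next
    case False
    note reduce = psd_nonpositive_pivot[of S a G, OF insert.hyps insert.prems False]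
    then obtain ws where "\<forall>y. quad_form S G y = (\<Sum>w\<leftarrow>ws. (\<Sum>s\<in>S. w s * y s)\<^sup>2)"
      using insert.IH[of G] insert.prems by (metis (no_types))
    then show ?thesis using reduce extend by (intro exI[of _ "extend ws"]) simp
  qed
qed

section \<open>Limits of sums of squares of bounded degree\<close>

lemma sum_list_power2_eq_quad_form:
  "(\<Sum>g\<leftarrow>gs. (\<Sum>s\<in>S. y s * b g s)\<^sup>2) = quad_form S (\<lambda>s s'. \<Sum>g\<leftarrow>gs. b g s * b g s') y"
proof (induction gs)
  case (Cons g gs)
  have "(\<Sum>s\<in>S. y s * b g s)\<^sup>2 = quad_form S (\<lambda>s s'. b g s * b g s') y"
    unfolding quad_form_def power2_eq_square sum_product by (intro sum.cong refl) (simp only: ac_simps)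
  with Cons show ?case
    by (simp add: quad_form_def distrib_left sum.distrib)
qed (simp add: quad_form_def)

lemma abs_sum_list_mult_le:
  fixes a b :: "'g \<Rightarrow> real"
  shows "2 * \<bar>\<Sum>g\<leftarrow>gs. a g * b g\<bar> \<le> (\<Sum>g\<leftarrow>gs. (a g)\<^sup>2) + (\<Sum>g\<leftarrow>gs. (b g)\<^sup>2)"
proof -
  have "2 * \<bar>\<Sum>g\<leftarrow>gs. a g * b g\<bar> \<le> (\<Sum>g\<leftarrow>gs. 2 * \<bar>a g * b g\<bar>)"
    using sum_list_abs[of "map (\<lambda>g. a g * b g) gs"] by (simp add: sum_list_const_mult o_def)
  also have "\<dots> \<le> (\<Sum>g\<leftarrow>gs. (a g)\<^sup>2 + (b g)\<^sup>2)"
  proof (intro sum_list_mono)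
    fix g
    have "0 \<le> (\<bar>a g\<bar> - \<bar>b g\<bar>)\<^sup>2" by simp
    then show "2 * \<bar>a g * b g\<bar> \<le> (a g)\<^sup>2 + (b g)\<^sup>2"
      by (simp add: power2_eq_square abs_mult algebra_simps)
  qed
  finally show ?thesis by (simp add: sum_list_addf)
qed

lemma bounded_family_convergent_subseq:
  fixes X :: "nat \<Rightarrow> 'k \<Rightarrow> real"
  assumes "finite K" "\<And>k. k \<in> K \<Longrightarrow> Bseq (\<lambda>j. X j k)"
  shows "\<exists>r. strict_mono r \<and> (\<forall>k\<in>K. convergent (\<lambda>j. X (r j) k))"
  using assms
proof (induction K rule: finite_induct)
  case empty then show ?case by (intro exI[of _ id]) (auto simp: strict_mono_def)
next
  case (insert a K)
  have "\<exists>r. strict_mono r \<and> (\<forall>k\<in>K. convergent (\<lambda>j. X (r j) k))"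
    using insert.prems by (intro insert.IH) simp
  then obtain r where r: "strict_mono r" "\<forall>k\<in>K. convergent (\<lambda>j. X (r j) k)" by blast
  obtain r' where r': "strict_mono r'" "monoseq (\<lambda>j. X (r (r' j)) a)"
    using seq_monosub[of "\<lambda>j. X (r j) a"] by blast
  have "Bseq (\<lambda>j. X (r (r' j)) a)"
    using insert.prems[of a] Bseq_subseq[of "\<lambda>j. X j a" "r \<circ> r'"] by simp
  then have "convergent (\<lambda>j. X (r (r' j)) a)"
    using r'(2) by (rule Bseq_monoseq_convergent)
  moreover have "convergent (\<lambda>j. X (r (r' j)) k)" if "k \<in> K" for k
    using convergent_subseq_convergent[OF _ r'(1), of "\<lambda>j. X (r j) k"] r(2) that by (simp add: o_def)
  ultimately show ?case
    using strict_mono_o[OF r(1) r'(1)] by (intro exI[of _ "r \<circ> r'"]) (auto simp: o_def)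
qed

lemma Bseq_if_abs_le_convergent:
  fixes g a b :: "nat \<Rightarrow> real"
  assumes "\<And>j. 2 * \<bar>g j\<bar> \<le> a j + b j" "convergent a" "convergent b"
  shows "Bseq g"
proof -
  obtain K where K: "\<And>j. norm (a j + b j) \<le> K"
    using convergent_imp_Bseq[OF convergent_add[OF assms(2,3)]] unfolding Bseq_def by auto
  have "norm (g j) \<le> K" for j
    using K[of j] assms(1)[of j] abs_ge_zero[of "g j"] abs_ge_self[of "a j + b j"] unfolding real_norm_def by linarith
  then show ?thesis by (rule BseqI')
qed

lemma tendsto_quad_form:
  assumes "finite S" "\<And>s s'. s \<in> S \<Longrightarrow> s' \<in> S \<Longrightarrow> (\<lambda>j. G j s s') \<longlonglongrightarrow> L s s'"
  shows "(\<lambda>j. quad_form S (G j) y) \<longlonglongrightarrow> quad_form S L y"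
  unfolding quad_form_def using assms(2) by (intro tendsto_sum tendsto_mult_left) auto

text \<open>Gram matrices are taken with respect to the Lagrange basis of the grid \<open>{0..D}\<^sup>n\<close>:
  their size depends only on \<open>n\<close> and \<open>D\<close>, and their entries are bounded by values of
  \<open>F\<close> at grid points. This makes sums of squares of bounded degree a closed set.\<close>

lemma sos_gram_matrix:
  assumes "is_sos n F" "line_deg_le n D F"
  obtains G where "\<And>x. F x = quad_form (grid n D) G (\<lambda>s. grid_basis D {..<n} s x)"
    "\<And>s s'. G s s' = G s' s" "\<And>y. quad_form (grid n D) G y \<ge> 0"
    "\<And>s s'. 2 * \<bar>G s s'\<bar> \<le> F (grid_point n s) + F (grid_point n s')"
proof -
  obtain gs where gs: "\<forall>g\<in>set gs. is_poly n g" "F = (\<lambda>x. \<Sum>g\<leftarrow>gs. (g x)\<^sup>2)"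
    using assms(1) unfolding is_sos_def by blast
  define G where "G s s' = (\<Sum>g\<leftarrow>gs. g (grid_point n s) * g (grid_point n s'))" for s s'
  have interp: "g x = (\<Sum>s\<in>grid n D. grid_basis D {..<n} s x * g (grid_point n s))"
    if "g \<in> set gs" for g x
    using is_sos_summand_line_deg_le[OF assms(2)[unfolded gs(2)] gs(1) that] gs(1) that
    by (intro lagrange_interpolation_grid) auto
  show thesis
  proof (rule that[of G])
    show "F x = quad_form (grid n D) G (\<lambda>s. grid_basis D {..<n} s x)" for x
      unfolding gs(2) G_def sum_list_power2_eq_quad_form[symmetric]
      using interp by (intro arg_cong[where f = sum_list] map_cong) auto
    show "G s s' = G s' s" for s s'
      unfolding G_def by (simp add: mult.commute)
    show "quad_form (grid n D) G y \<ge> 0" for y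
      unfolding G_def sum_list_power2_eq_quad_form[symmetric] by (intro sum_list_nonneg) auto
    show "2 * \<bar>G s s'\<bar> \<le> F (grid_point n s) + F (grid_point n s')" for s s'
      unfolding G_def gs(2) by (rule abs_sum_list_mult_le)
  qed
qed

lemma psd_gram_matrix_is_sos:
  assumes "\<And>s s'. G s s' = G s' s" "\<And>y. quad_form (grid n D) G y \<ge> 0"
  shows "is_sos n (\<lambda>x. quad_form (grid n D) G (\<lambda>s. grid_basis D {..<n} s x))"
proof -
  obtain ws where ws: "\<forall>y. quad_form (grid n D) G y = (\<Sum>w\<leftarrow>ws. (\<Sum>s\<in>grid n D. w s * y s)\<^sup>2)"
    using psd_quad_form_eq_sum_squares[OF finite_grid assms] by blast
  define hs where "hs = map (\<lambda>w x. \<Sum>s\<in>grid n D. w s * grid_basis D {..<n} s x) ws"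
  have "\<forall>h\<in>set hs. is_poly n h"
    unfolding hs_def by (auto intro!: is_poly_sum is_poly_scale is_poly_grid_basis finite_grid)
  moreover have "quad_form (grid n D) G (\<lambda>s. grid_basis D {..<n} s x) = (\<Sum>h\<leftarrow>hs. (h x)\<^sup>2)" for x
    using ws by (simp add: hs_def o_def)
  ultimately show ?thesis unfolding is_sos_def by blast
qed

lemma is_sos_limit:
  assumes sos: "\<And>j. is_sos n (F j)" and deg: "\<And>j. line_deg_le n D (F j)"
    and lim: "\<And>x. (\<lambda>j. F j x) \<longlonglongrightarrow> f x"
  shows "is_sos n f"
proof -
  let ?S = "grid n D" and ?L = "\<lambda>x s. grid_basis D {..<n} s x" and ?P = "grid_point n"
  have "\<exists>Gj. (\<forall>x. F j x = quad_form ?S Gj (?L x)) \<and> (\<forall>s s'. Gj s s' = Gj s' s) \<and>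
      (\<forall>y. quad_form ?S Gj y \<ge> 0) \<and> (\<forall>s s'. 2 * \<bar>Gj s s'\<bar> \<le> F j (?P s) + F j (?P s'))" for j
    by (rule sos_gram_matrix[OF sos deg]) blast
  then obtain G where "\<forall>j. (\<forall>x. F j x = quad_form ?S (G j) (?L x)) \<and> (\<forall>s s'. G j s s' = G j s' s) \<and>
      (\<forall>y. quad_form ?S (G j) y \<ge> 0) \<and> (\<forall>s s'. 2 * \<bar>G j s s'\<bar> \<le> F j (?P s) + F j (?P s'))"
    by metis
  then have G: "\<And>j x. F j x = quad_form ?S (G j) (?L x)" "\<And>j s s'. G j s s' = G j s' s"
      "\<And>j y. quad_form ?S (G j) y \<ge> 0" "\<And>j s s'. 2 * \<bar>G j s s'\<bar> \<le> F j (?P s) + F j (?P s')"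
    by blast+
  have "Bseq (\<lambda>j. G j s s')" for s s'
    using G(4) lim[THEN convergentI] by (intro Bseq_if_abs_le_convergent) auto
  then obtain r where r: "strict_mono r" "\<forall>k\<in>?S \<times> ?S. convergent (\<lambda>j. G (r j) (fst k) (snd k))"
    using bounded_family_convergent_subseq[of "?S \<times> ?S" "\<lambda>j k. G j (fst k) (snd k)"] finite_grid
    by blast
  define Glim where "Glim s s' = lim (\<lambda>j. G (r j) s s')" for s s'
  have G_lim: "(\<lambda>j. G (r j) s s') \<longlonglongrightarrow> Glim s s'" if "s \<in> ?S" "s' \<in> ?S" for s s'
    using r(2) that unfolding Glim_def convergent_LIMSEQ_iff by fastforce
  have quad_lim: "(\<lambda>j. quad_form ?S (G (r j)) y) \<longlonglongrightarrow> quad_form ?S Glim y" for y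
    by (intro tendsto_quad_form finite_grid G_lim)
  have "f = (\<lambda>x. quad_form ?S Glim (?L x))"
  proof
    show "f x = quad_form ?S Glim (?L x)" for x
      using LIMSEQ_subseq_LIMSEQ[OF lim r(1)] quad_lim unfolding G(1) o_def by (rule LIMSEQ_unique)
  qed
  moreover have "Glim s s' = Glim s' s" for s s'
    unfolding Glim_def using G(2) by simp
  moreover have "quad_form ?S Glim y \<ge> 0" for y
    using G(3) by (intro LIMSEQ_le_const[OF quad_lim]) auto
  ultimately show ?thesis using psd_gram_matrix_is_sos[of Glim n D] by simp
qed

section \<open>Cancelling a monomial factor\<close>

lemma is_poly_vanishing_on_hyperplane:
  assumes "is_poly n g" "i < n" "\<And>x. x i = 0 \<Longrightarrow> g x = 0"
  obtains g' where "is_poly n g'" "\<And>x. g x = x i * g' x"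
proof -
  obtain A c where A: "finite A" "A \<subseteq> exps n" "g = (\<lambda>x. \<Sum>\<alpha>\<in>A. c \<alpha> * monom n \<alpha> x)"
    using assms(1) unfolding is_poly_def by blast
  define A\<^sub>0 where "A\<^sub>0 = {\<alpha>\<in>A. \<alpha> i = 0}"
  define A\<^sub>1 where "A\<^sub>1 = {\<alpha>\<in>A. \<alpha> i \<noteq> 0}"
  define g\<^sub>0 where "g\<^sub>0 x = (\<Sum>\<alpha>\<in>A\<^sub>0. c \<alpha> * monom n \<alpha> x)" for x
  define g' where "g' x = (\<Sum>\<alpha>\<in>A\<^sub>1. c \<alpha> * monom n (\<alpha>(i := \<alpha> i - 1)) x)" for x
  have split: "g x = g\<^sub>0 x + x i * g' x" for x
  proof -
    have "A = A\<^sub>0 \<union> A\<^sub>1" "A\<^sub>0 \<inter> A\<^sub>1 = {}" unfolding A\<^sub>0_def A\<^sub>1_def by auto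
    then have "g x = g\<^sub>0 x + (\<Sum>\<alpha>\<in>A\<^sub>1. c \<alpha> * monom n \<alpha> x)"
      unfolding A(3) g\<^sub>0_def using A(1) by (simp add: sum.union_disjoint)
    also have "(\<Sum>\<alpha>\<in>A\<^sub>1. c \<alpha> * monom n \<alpha> x) = x i * g' x"
      unfolding g'_def sum_distrib_left A\<^sub>1_def
      by (intro sum.cong refl) (simp add: monom_Suc[OF assms(2)] ac_simps)
    finally show ?thesis .
  qed
  have "g\<^sub>0 x = g\<^sub>0 (x(i := 0))" for x
    unfolding g\<^sub>0_def A\<^sub>0_def by (intro sum.cong refl) (simp add: monom_fun_upd_indep[OF assms(2)])
  then have "g\<^sub>0 x = 0" for x
    using split[of "x(i := 0)"] assms(3)[of "x(i := 0)"] by simp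
  moreover have "is_poly n g'"
    unfolding g'_def using A(1) by (intro is_poly_sum is_poly_scale is_poly_monom) (auto simp: A\<^sub>1_def)
  ultimately show thesis using that split by simp
qed

lemma is_sos_vanishing_on_hyperplane:
  assumes "is_sos n f" "i < n" "\<And>x. x i = 0 \<Longrightarrow> f x = 0"
  obtains f' where "is_sos n f'" "\<And>x. f x = (x i)\<^sup>2 * f' x"
proof -
  obtain gs where gs: "\<forall>g\<in>set gs. is_poly n g" "f = (\<lambda>x. \<Sum>g\<leftarrow>gs. (g x)\<^sup>2)"
    using assms(1) unfolding is_sos_def by blast
  have "\<exists>g'. is_poly n g' \<and> (\<forall>x. g x = x i * g' x)" if "g \<in> set gs" for g
  proof -
    have "g x = 0" if "x i = 0" for x
    proof -
      have "(g x)\<^sup>2 \<le> (\<Sum>g\<leftarrow>gs. (g x)\<^sup>2)"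
        using \<open>g \<in> set gs\<close> by (intro member_le_sum_list) auto
      then show ?thesis using assms(3)[of x] that by (simp add: gs(2))
    qed
    then show ?thesis by (metis is_poly_vanishing_on_hyperplane gs(1) that assms(2))
  qed
  then obtain quot where quot: "\<And>g. g \<in> set gs \<Longrightarrow> is_poly n (quot g) \<and> (\<forall>x. g x = x i * quot g x)"
    by metis
  show thesis
  proof (rule that[of "\<lambda>x. \<Sum>g\<leftarrow>map quot gs. (g x)\<^sup>2"])
    show "is_sos n (\<lambda>x. \<Sum>g\<leftarrow>map quot gs. (g x)\<^sup>2)"
      unfolding is_sos_def using quot by (intro exI[of _ "map quot gs"]) auto
    have "(\<Sum>g\<leftarrow>gs. (g x)\<^sup>2) = (\<Sum>g\<leftarrow>gs. (x i * quot g x)\<^sup>2)" for x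
      using quot by (intro arg_cong[where f = sum_list] map_cong) auto
    then show "f x = (x i)\<^sup>2 * (\<Sum>g\<leftarrow>map quot gs. (g x)\<^sup>2)" for x
      by (simp add: gs(2) o_def sum_list_power2_mult)
  qed
qed

lemma is_sos_cancel_var_square:
  assumes "i < n" "is_poly n p" "is_sos n (\<lambda>x. (x i)\<^sup>2 * p x)"
  shows "is_sos n p"
proof -
  obtain f where f: "is_sos n f" "\<And>x. (x i)\<^sup>2 * p x = (x i)\<^sup>2 * f x"
    using is_sos_vanishing_on_hyperplane[OF assms(3,1)] by auto
  have "p x - f x = 0" for x
  proof (rule is_poly_vanishes_off_hyperplanes[of n "\<lambda>x. p x - f x" "{i}"])
    show "is_poly n (\<lambda>x. p x - f x)"
      using assms(2) is_sos_imp_is_poly[OF f(1)] by (rule is_poly_diff)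
  qed (use assms(1) f(2) in auto)
  then have "p = f" by auto
  then show ?thesis using f(1) by simp
qed

text \<open>On the line through \<open>x\<close> in direction \<open>i\<close> we get \<open>t K(x) p = t\<^sup>2 f\<close> with \<open>f \<ge> 0\<close>,
  so the nonnegative \<open>p\<close> vanishes for all \<open>t\<close> of sign opposite to \<open>K(x)\<close>.\<close>

lemma psd_times_odd_factor_sos_imp_zero:
  assumes "i < n" "is_poly n p" "\<And>x. p x \<ge> 0" "\<And>x t. K (x(i := t)) = K x"
    and "is_sos n (\<lambda>x. x i * K x * p x)" "K x \<noteq> 0"
  shows "p x = 0"
proof -
  obtain f where f: "is_sos n f" "\<And>x. x i * K x * p x = (x i)\<^sup>2 * f x"
    using is_sos_vanishing_on_hyperplane[OF assms(5,1)] by auto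
  obtain q where q: "\<And>t. p (x(i := t)) = poly q t"
    using is_poly_restrict_line[OF assms(2,1)] by blast
  have "poly q t = 0" if "t * K x < 0" for t
  proof -
    have "t * K x * poly q t = t * (t * f (x(i := t)))"
      using f(2)[of "x(i := t)"] assms(4)[of x t] q[of t] by (simp add: power2_eq_square ac_simps)
    moreover have "t \<noteq> 0" using that by auto
    ultimately have "K x * poly q t = t * f (x(i := t))"
      by (simp add: power2_eq_square mult.assoc)
    then have "(K x)\<^sup>2 * poly q t = (t * K x) * f (x(i := t))"
      by (metis mult.assoc mult.commute power2_eq_square)
    moreover have "(t * K x) * f (x(i := t)) \<le> 0"
      using that is_sos_nonneg[OF f(1)] by (simp add: mult_nonpos_nonneg)
    ultimately have "(K x)\<^sup>2 * poly q t \<le> 0" by linarith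
    moreover have "(K x)\<^sup>2 > 0" using assms(6) by simp
    ultimately have "poly q t \<le> 0" by (simp add: mult_le_0_iff)
    moreover have "poly q t \<ge> 0" using assms(3) q by metis
    ultimately show ?thesis by simp
  qed
  moreover have "infinite {t. t * K x < 0}"
    using assms(6) infinite_Iio[of 0] infinite_Ioi[of 0]
    by (cases "K x > 0") (auto simp: mult_less_0_iff lessThan_def greaterThan_def)
  ultimately have "q = 0" using poly_eq_0_if_infinite_zeros by blast
  then show ?thesis using q[of "x i"] by simp
qed

lemma sum_fun_upd_less:
  fixes \<alpha> :: "nat \<Rightarrow> nat"
  assumes "i < n" "k < \<alpha> i" shows "(\<Sum>j<n. (\<alpha>(i := k)) j) < (\<Sum>j<n. \<alpha> j)"
proof -
  have "(\<Sum>j<n. (\<alpha>(i := k)) j) = k + (\<Sum>j\<in>{..<n} - {i}. \<alpha> j)"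
    using assms(1) by (subst sum.remove[of _ i]) (auto intro!: sum.cong)
  also have "\<dots> < \<alpha> i + (\<Sum>j\<in>{..<n} - {i}. \<alpha> j)" using assms(2) by simp
  also have "\<dots> = (\<Sum>j<n. \<alpha> j)" using assms(1) by (subst (2) sum.remove[of _ i]) auto
  finally show ?thesis .
qed

lemma is_sos_const_multiple_imp_sos:
  assumes "\<And>x. p x \<ge> 0" "c \<noteq> 0" "is_sos n (\<lambda>x. c * p x)"
  shows "is_sos n p"
proof (cases "c > 0")
  case True
  then show ?thesis using is_sos_scale[OF assms(3), of "1 / c"] by simp
next
  case False
  then have "p x = 0" for x
    using is_sos_nonneg[OF assms(3), of x] assms(1)[of x] assms(2) by (simp add: zero_le_mult_iff)
  then have "p = (\<lambda>x. 0)" by auto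
  then show ?thesis using is_sos_zero by simp
qed

lemma is_sos_cancel_monomial_square:
  assumes "i < n" "\<alpha> i = Suc (Suc k)" "is_poly n p" "is_sos n (\<lambda>x. c * monom n \<alpha> x * p x)"
  shows "is_sos n (\<lambda>x. c * monom n (\<alpha>(i := k)) x * p x)"
proof -
  have "monom n (\<alpha>(i := Suc k)) x = x i * monom n (\<alpha>(i := k)) x" for x
    using monom_Suc[of i n "\<alpha>(i := Suc k)" k x] assms(1) by simp
  then have "(\<lambda>x. c * monom n \<alpha> x * p x) = (\<lambda>x. (x i)\<^sup>2 * (c * monom n (\<alpha>(i := k)) x * p x))"
    using monom_Suc[of i n \<alpha> "Suc k", OF assms(1,2)] by (simp add: power2_eq_square ac_simps)
  then have "is_sos n (\<lambda>x. (x i)\<^sup>2 * (c * monom n (\<alpha>(i := k)) x * p x))"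
    using assms(4) by (simp only:)
  moreover have "is_poly n (\<lambda>x. c * monom n (\<alpha>(i := k)) x * p x)"
    using is_poly_mult[OF is_poly_scale[OF is_poly_monom] assms(3)] .
  ultimately show ?thesis
    using is_sos_cancel_var_square[OF assms(1)] by blast
qed

lemma is_sos_odd_monomial_multiple_imp_zero:
  assumes "i < n" "\<alpha> i = 1" "is_poly n p" "\<And>x. p x \<ge> 0" "c \<noteq> 0"
    and "is_sos n (\<lambda>x. c * monom n \<alpha> x * p x)"
  shows "p = (\<lambda>x. 0)"
proof -
  define \<beta> where "\<beta> = \<alpha>(i := 0)"
  have odd: "is_sos n (\<lambda>x. x i * (c * monom n \<beta> x) * p x)"
    using assms(6) monom_Suc[of i n \<alpha> 0] assms(1,2) by (simp add: \<beta>_def ac_simps)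
  have indep: "c * monom n \<beta> (x(i := t)) = c * monom n \<beta> x" for x t
    using monom_fun_upd_indep[OF assms(1)] by (simp add: \<beta>_def)
  have "p x = 0" if "\<forall>j\<in>{..<n}. x j \<noteq> 0" for x
  proof (rule psd_times_odd_factor_sos_imp_zero[OF assms(1,3,4) indep odd])
    show "c * monom n \<beta> x \<noteq> 0" using that assms(5) unfolding Defs.monom_def by simp
  qed
  then have "p x = 0" for x
    by (rule is_poly_vanishes_off_hyperplanes[OF assms(3) order_refl])
  then show ?thesis by auto
qed

lemma is_sos_monomial_multiple_imp_sos:
  assumes "is_poly n p" "\<And>x. p x \<ge> 0" "c \<noteq> 0" "is_sos n (\<lambda>x. c * monom n \<alpha> x * p x)"
  shows "is_sos n p"
  using assms(4)
proof (induction "\<Sum>i<n. \<alpha> i" arbitrary: \<alpha> rule: less_induct)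
  case less
  show ?case
  proof (cases "\<exists>i<n. \<alpha> i \<noteq> 0")
    case False
    then have "monom n \<alpha> x = 1" for x unfolding Defs.monom_def by simp
    then show ?thesis using less.prems is_sos_const_multiple_imp_sos[OF assms(2,3)] by simp
  next
    case True
    then obtain i k where i: "i < n" "\<alpha> i = Suc k" by (metis not0_implies_Suc)
    show ?thesis
    proof (cases k)
      case 0
      then show ?thesis
        using is_sos_odd_monomial_multiple_imp_zero[OF i(1) _ assms(1-3) less.prems] i(2) is_sos_zero
        by simp
    next
      case (Suc k')
      have "(\<Sum>j<n. (\<alpha>(i := k')) j) < (\<Sum>j<n. \<alpha> j)"
        using i Suc by (intro sum_fun_upd_less) auto
      then show ?thesis
        using less.hyps is_sos_cancel_monomial_square[OF i(1) _ assms(1) less.prems] i(2) Suc by blast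
    qed
  qed
qed

section \<open>The lowest monomial under a weighted rescaling\<close>

lemma sum_digits_less_power:
  fixes B :: nat
  shows "(\<And>j. j < n \<Longrightarrow> \<alpha> j < B) \<Longrightarrow> (\<Sum>j<n. B ^ j * \<alpha> j) < B ^ n"
proof (induction n)
  case (Suc n)
  then have "(\<Sum>j<Suc n. B ^ j * \<alpha> j) < B ^ n + B ^ n * \<alpha> n" by simp
  also have "\<dots> = B ^ n * (\<alpha> n + 1)" by (simp add: algebra_simps)
  also have "\<dots> \<le> B ^ n * B" using Suc.prems[of n] by (intro mult_left_mono) auto
  finally show ?case by (simp add: mult.commute)
qed simp

lemma sum_digits_inj:
  fixes B :: nat
  assumes "\<And>j. j < n \<Longrightarrow> \<alpha> j < B \<and> \<beta> j < B" "(\<Sum>j<n. B ^ j * \<alpha> j) = (\<Sum>j<n. B ^ j * \<beta> j)"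
    and "j < n"
  shows "\<alpha> j = \<beta> j"
  using assms
proof (induction n)
  case (Suc n)
  define a b where "a = (\<Sum>j<n. B ^ j * \<alpha> j)" and "b = (\<Sum>j<n. B ^ j * \<beta> j)"
  have "a < B ^ n" "b < B ^ n"
    unfolding a_def b_def using Suc.prems(1) by (auto intro!: sum_digits_less_power)
  have eq: "a + \<alpha> n * B ^ n = b + \<beta> n * B ^ n"
    using Suc.prems(2) unfolding a_def b_def by (simp add: mult.commute)
  have "B ^ n \<noteq> 0" using \<open>a < B ^ n\<close> by linarith
  have "\<alpha> n = (a + \<alpha> n * B ^ n) div B ^ n" using \<open>a < B ^ n\<close> \<open>B ^ n \<noteq> 0\<close> by simp
  also have "\<dots> = (b + \<beta> n * B ^ n) div B ^ n" by (simp only: eq)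
  also have "\<dots> = \<beta> n" using \<open>b < B ^ n\<close> \<open>B ^ n \<noteq> 0\<close> by simp
  finally have "\<alpha> n = \<beta> n" .
  have "a = (a + \<alpha> n * B ^ n) mod B ^ n" using \<open>a < B ^ n\<close> by simp
  also have "\<dots> = (b + \<beta> n * B ^ n) mod B ^ n" by (simp only: eq)
  also have "\<dots> = b" using \<open>b < B ^ n\<close> by simp
  finally have "a = b" .
  then show ?case
    using Suc.IH Suc.prems \<open>\<alpha> n = \<beta> n\<close> unfolding a_def b_def by (cases "j = n") auto
qed simp

lemma inj_on_digit_weight:
  fixes B :: nat
  assumes "A \<subseteq> exps n" "\<And>\<alpha> j. \<alpha> \<in> A \<Longrightarrow> \<alpha> j < B"
  shows "inj_on (\<lambda>\<alpha>. \<Sum>j<n. B ^ j * \<alpha> j) A"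
proof (rule inj_onI)
  fix \<alpha> \<beta> assume \<alpha>\<beta>: "\<alpha> \<in> A" "\<beta> \<in> A" and eq: "(\<Sum>j<n. B ^ j * \<alpha> j) = (\<Sum>j<n. B ^ j * \<beta> j)"
  show "\<alpha> = \<beta>"
  proof
    fix j show "\<alpha> j = \<beta> j"
    proof (cases "j < n")
      case True
      then show ?thesis using sum_digits_inj[of n \<alpha> B \<beta> j] assms(2) \<alpha>\<beta> eq by blast
    next
      case False
      then have "\<alpha> j = 0" "\<beta> j = 0"
        using assms(1) \<alpha>\<beta> unfolding exps_def by (auto simp: not_less)
      then show ?thesis by simp
    qed
  qed
qed

lemma monom_power_scale:
  fixes B :: nat
  shows "monom n \<alpha> (\<lambda>j. t ^ (B ^ j) * x j) = t ^ (\<Sum>j<n. B ^ j * \<alpha> j) * monom n \<alpha> x"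
  unfolding monom_scale power_sum by (simp add: power_mult)

lemma inj_on_strict_min:
  fixes w :: "'a \<Rightarrow> 'b :: linorder"
  assumes "finite A" "A \<noteq> {}" "inj_on w A"
  obtains a\<^sub>0 where "a\<^sub>0 \<in> A" "\<And>a. a \<in> A \<Longrightarrow> a \<noteq> a\<^sub>0 \<Longrightarrow> w a\<^sub>0 < w a"
proof -
  have "Min (w ` A) \<in> w ` A" using assms(1,2) by (intro Min_in) auto
  then obtain a\<^sub>0 where "a\<^sub>0 \<in> A" "w a\<^sub>0 = Min (w ` A)" by auto
  moreover have "w a\<^sub>0 < w a" if "a \<in> A" "a \<noteq> a\<^sub>0" for a
    using Min_le[of "w ` A" "w a"] inj_on_eq_iff[OF assms(3) \<open>a\<^sub>0 \<in> A\<close> that(1)] assms(1) that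
      \<open>w a\<^sub>0 = Min (w ` A)\<close> by (simp add: order_le_less)
  ultimately show thesis using that by blast
qed

lemma tendsto_lowest_power:
  fixes u :: "nat \<Rightarrow> real"
  assumes "finite A" "\<alpha>\<^sub>0 \<in> A" "\<And>\<alpha>. \<alpha> \<in> A \<Longrightarrow> \<alpha> \<noteq> \<alpha>\<^sub>0 \<Longrightarrow> w \<alpha>\<^sub>0 < w \<alpha>" "u \<longlonglongrightarrow> 0"
  shows "(\<lambda>k. \<Sum>\<alpha>\<in>A. a \<alpha> * u k ^ (w \<alpha> - w \<alpha>\<^sub>0)) \<longlonglongrightarrow> a \<alpha>\<^sub>0"
proof -
  have "(\<lambda>k. \<Sum>\<alpha>\<in>A. a \<alpha> * u k ^ (w \<alpha> - w \<alpha>\<^sub>0)) \<longlonglongrightarrow> (\<Sum>\<alpha>\<in>A. a \<alpha> * 0 ^ (w \<alpha> - w \<alpha>\<^sub>0))"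
    by (intro tendsto_intros assms(4))
  also have "(\<Sum>\<alpha>\<in>A. a \<alpha> * 0 ^ (w \<alpha> - w \<alpha>\<^sub>0)) = (\<Sum>\<alpha>\<in>A. if \<alpha> = \<alpha>\<^sub>0 then a \<alpha>\<^sub>0 else 0)"
    using assms(3) by (intro sum.cong) auto
  finally show ?thesis using assms(1,2) by simp
qed

text \<open>Since \<open>B\<close> exceeds every exponent, the weights \<open>\<Sum>j<n. B ^ j * \<alpha> j\<close> of the
  monomials of \<open>h\<close> are pairwise distinct base-\<open>B\<close> numbers, so a single monomial dominates
  \<open>h (t\<^bsup>B\<^sup>0\<^esup> x\<^sub>0, t\<^bsup>B\<^sup>1\<^esup> x\<^sub>1, \<dots>)\<close> as \<open>t \<rightarrow> 0\<close>.\<close>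

lemma form_lowest_monomial_limit:
  fixes B :: nat and u :: "nat \<Rightarrow> real"
  assumes "is_form n d h" "h \<noteq> (\<lambda>x. 0)" "d < B" "\<And>k. u k > 0" "u \<longlonglongrightarrow> 0"
  shows "\<exists>c \<alpha> \<mu>. c \<noteq> 0 \<and>
    (\<forall>x. (\<lambda>k. h (\<lambda>j. u k ^ (B ^ j) * x j) / u k ^ \<mu>) \<longlonglongrightarrow> c * monom n \<alpha> x)"
proof -
  obtain A c where A: "finite A" "A \<subseteq> {\<alpha> \<in> exps n. (\<Sum>i<n. \<alpha> i) = d}"
      "h = (\<lambda>x. \<Sum>\<alpha>\<in>A. c \<alpha> * monom n \<alpha> x)"
    using assms(1) unfolding is_form_def by blast
  define A' where "A' = {\<alpha>\<in>A. c \<alpha> \<noteq> 0}"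
  define w where "w \<alpha> = (\<Sum>j<n. B ^ j * \<alpha> j)" for \<alpha> :: "nat \<Rightarrow> nat"
  have h: "h x = (\<Sum>\<alpha>\<in>A'. c \<alpha> * monom n \<alpha> x)" for x
    unfolding A(3) A'_def by (subst sum.inter_filter[OF A(1)]) (auto intro!: sum.cong)
  have "finite A'" "A' \<noteq> {}"
    using A(1) assms(2) h unfolding A'_def by auto
  have digits: "\<alpha> j < B" if "\<alpha> \<in> A'" for \<alpha> j
    using that A(2) member_le_sum[of j "{..<n}" \<alpha>] assms(3) unfolding A'_def exps_def
    by (cases "j < n") auto
  have "A' \<subseteq> exps n" using A(2) unfolding A'_def by auto
  then have "inj_on w A'" unfolding w_def using digits by (rule inj_on_digit_weight)
  obtain \<alpha>\<^sub>0 where \<alpha>\<^sub>0: "\<alpha>\<^sub>0 \<in> A'" and lowest: "\<And>\<alpha>. \<alpha> \<in> A' \<Longrightarrow> \<alpha> \<noteq> \<alpha>\<^sub>0 \<Longrightarrow> w \<alpha>\<^sub>0 < w \<alpha>"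
    using inj_on_strict_min[OF \<open>finite A'\<close> \<open>A' \<noteq> {}\<close> \<open>inj_on w A'\<close>] by blast
  then have le: "w \<alpha>\<^sub>0 \<le> w \<alpha>" if "\<alpha> \<in> A'" for \<alpha>
    using that by (cases "\<alpha> = \<alpha>\<^sub>0") (auto intro: less_imp_le)
  show ?thesis
  proof (intro exI conjI allI)
    show "c \<alpha>\<^sub>0 \<noteq> 0" using \<alpha>\<^sub>0 unfolding A'_def by simp
    fix x
    have "h (\<lambda>j. u k ^ (B ^ j) * x j) / u k ^ w \<alpha>\<^sub>0 =
        (\<Sum>\<alpha>\<in>A'. c \<alpha> * monom n \<alpha> x * u k ^ (w \<alpha> - w \<alpha>\<^sub>0))" for k
      unfolding h monom_power_scale w_def[symmetric] sum_divide_distrib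
      using le assms(4)[of k] by (intro sum.cong refl) (simp add: power_diff)
    then show "(\<lambda>k. h (\<lambda>j. u k ^ (B ^ j) * x j) / u k ^ w \<alpha>\<^sub>0) \<longlonglongrightarrow> c \<alpha>\<^sub>0 * monom n \<alpha>\<^sub>0 x"
      using tendsto_lowest_power[where a = "\<lambda>\<alpha>. c \<alpha> * monom n \<alpha> x" and w = w,
          OF \<open>finite A'\<close> \<alpha>\<^sub>0 lowest assms(5)] by simp
  qed
qed

lemma sos_multiples_of_rescalings_imp_sos:
  fixes B :: nat and u :: "nat \<Rightarrow> real"
  assumes h: "is_form n d h" "h \<noteq> (\<lambda>x. 0)" "d < B" and p: "is_form n m p" "\<And>x. p x \<ge> 0"
    and u: "\<And>k. u k > 0" "u \<longlonglongrightarrow> 0"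
    and sos: "\<And>k. is_sos n (\<lambda>x. h x * p (\<lambda>j. x j / u k ^ (B ^ j)))"
  shows "is_sos n p"
proof -
  obtain c \<alpha> \<mu> where "c \<noteq> 0"
    and lim: "\<And>x. (\<lambda>k. h (\<lambda>j. u k ^ (B ^ j) * x j) / u k ^ \<mu>) \<longlonglongrightarrow> c * monom n \<alpha> x"
    using form_lowest_monomial_limit[OF h u] by blast
  define F where "F k x = 1 / u k ^ \<mu> * (h (\<lambda>j. u k ^ (B ^ j) * x j) * p x)" for k x
  have "is_sos n (F k)" for k
  proof -
    have "is_sos n (\<lambda>x. h (\<lambda>j. u k ^ (B ^ j) * x j) * p x)"
      using is_sos_comp_scale[OF sos[of k], of "\<lambda>j. u k ^ (B ^ j)"] u(1)[of k] by simp
    then show ?thesis unfolding F_def using u(1)[of k] by (intro is_sos_scale) auto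
  qed
  moreover have "line_deg_le n (d + m) (F k)" for k
  proof -
    have "line_deg_le n d (\<lambda>x. h (\<lambda>j. u k ^ (B ^ j) * x j))"
      by (rule is_form_line_deg_le[OF is_form_comp_scale[OF h(1)]])
    then have "line_deg_le n (d + m) (\<lambda>x. h (\<lambda>j. u k ^ (B ^ j) * x j) * p x)"
      using is_form_line_deg_le[OF p(1)] by (rule line_deg_le_mult)
    then show ?thesis unfolding F_def by (rule line_deg_le_scale)
  qed
  moreover have "(\<lambda>k. F k x) \<longlonglongrightarrow> c * monom n \<alpha> x * p x" for x
    using tendsto_mult_right[OF lim[of x], of "p x"] by (simp add: F_def)
  ultimately have "is_sos n (\<lambda>x. c * monom n \<alpha> x * p x)"
    by (rule is_sos_limit)
  then show ?thesis
    using is_sos_monomial_multiple_imp_sos[OF is_form_imp_is_poly[OF p(1)] p(2) \<open>c \<noteq> 0\<close>] by blast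
qed

lemma pigeonhole_strict_mono:
  assumes "finite H" "\<And>k :: nat. \<exists>h\<in>H. Q k h"
  shows "\<exists>h\<in>H. \<exists>r :: nat \<Rightarrow> nat. strict_mono r \<and> (\<forall>k. Q (r k) h)"
proof -
  obtain h where "h \<in> H" "infinite {k. Q k h}"
    using pigeonhole_infinite_rel[of "UNIV :: nat set" H Q] assms by auto
  then show ?thesis using infinite_enumerate[of "{k. Q k h}"] by blast
qed

lemma finite_sos_multipliers_imp_sos:
  assumes "finite H" "\<forall>h\<in>H. (\<exists>d. is_form n d h) \<and> h \<noteq> (\<lambda>x. 0)"
    and "\<forall>q\<in>P_set n m. \<exists>h\<in>H. is_sos n (\<lambda>x. h x * q x)" and "p \<in> P_set n m"
  shows "is_sos n p"
proof -
  have p: "is_form n m p" "\<And>x. p x \<ge> 0" using assms(4) unfolding P_set_def by auto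
  define deg where "deg h = (SOME d. is_form n d h)" for h
  have deg: "is_form n (deg h) h" if "h \<in> H" for h
    using assms(2) that unfolding deg_def by (metis someI_ex)
  define B where "B = Suc (\<Sum>h\<in>H. deg h)"
  define u where "u k = 1 / real (Suc k)" for k
  have "(\<lambda>x. p (\<lambda>j. x j / u k ^ (B ^ j))) \<in> P_set n m" for k
  proof -
    have "(\<lambda>j. x j / u k ^ (B ^ j)) = (\<lambda>j. 1 / u k ^ (B ^ j) * x j)" for x by auto
    then show ?thesis
      using is_form_comp_scale[OF p(1), of "\<lambda>j. 1 / u k ^ (B ^ j)"] p(2) unfolding P_set_def by simp
  qed
  then have multiplier: "\<exists>h\<in>H. is_sos n (\<lambda>x. h x * p (\<lambda>j. x j / u k ^ (B ^ j)))" for k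
    using assms(3) by (auto dest!: bspec)
  obtain h and r :: "nat \<Rightarrow> nat" where h: "h \<in> H" "strict_mono r"
    "\<And>k. is_sos n (\<lambda>x. h x * p (\<lambda>j. x j / u (r k) ^ (B ^ j)))"
    using pigeonhole_strict_mono[of H "\<lambda>k h. is_sos n (\<lambda>x. h x * p (\<lambda>j. x j / u k ^ (B ^ j)))",
        OF assms(1) multiplier] by blast
  have "deg h < B"
    unfolding B_def using assms(1) h(1) by (simp add: le_imp_less_Suc member_le_sum)
  moreover have "(\<lambda>k. u (r k)) \<longlonglongrightarrow> 0"
    using LIMSEQ_subseq_LIMSEQ[OF LIMSEQ_inverse_real_of_nat h(2)]
    by (simp add: u_def o_def inverse_eq_divide)
  moreover have "u (r k) > 0" for k by (simp add: u_def)
  ultimately show ?thesis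
    using h(3) assms(2) h(1)
    by (intro sos_multiples_of_rescalings_imp_sos[OF deg[OF h(1)] _ _ p(1,2)]) auto
qed

theorem corollary2:
  fixes n m :: nat
  assumes "n \<ge> 1" and "m > 0" and "even m" and "Delta_set n m \<noteq> {}"
  shows "\<not> (\<exists>H. finite H \<and>
              (\<forall>h\<in>H. (\<exists>d. is_form n d h) \<and> h \<noteq> (\<lambda>x. 0)) \<and>
              (\<forall>p\<in>P_set n m. \<exists>h\<in>H. is_sos n (\<lambda>x. h x * p x)))"
proof
  \<comment> \<open>only the hypothesis on \<open>Delta_set n m\<close> is needed\<close>
  assume "\<exists>H. finite H \<and> (\<forall>h\<in>H. (\<exists>d. is_form n d h) \<and> h \<noteq> (\<lambda>x. 0)) \<and>
              (\<forall>p\<in>P_set n m. \<exists>h\<in>H. is_sos n (\<lambda>x. h x * p x))"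
  then have "is_sos n p" if "p \<in> P_set n m" for p
    using finite_sos_multipliers_imp_sos that by blast
  moreover obtain p where "p \<in> P_set n m" "\<not> is_sos n p"
    using assms(4) unfolding Delta_set_def Sigma_set_def P_set_def by auto
  ultimately show False by blast
qed

end
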